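(* Let $N=\{1,\dots,n\}$, $n\ge 2$, be a parallel-link network with one unit of demand and affine latencies $\ell_i(x_i)=a_ix_i+b_i$ with $a_i>0$, $b_i\ge 0$ for all $i\in N$. Then for every price cap $c\in\mathbb{R}_+$ there exists a $c$-capped subgame perfect Nash equilibrium, i.e. $\mathcal{T}(c)\neq\emptyset$.
   Context: Model: a finite set $N=\{1,\dots,n\}$, $n\ge 2$, of parallel links connecting a common source to a common destination; one unit of flow must be sent. A flow is a vector $x\in\mathbb{R}^N_+$ with $\sum_{i\in N}x_i=1$. Each link $i$ has a latency function $\ell_i$. A toll vector is $t\in\mathbb{R}^N_+$; the effective cost of link $i$ is $\ell_i(x_i)+t_i$. A flow $x$ is a Wardrop equilibrium for $t$ if for all $i,j\in N$ with $x_i>0$, $\ell_i(x_i)+t_i\le \ell_j(x_j)+t_j$; under the assumptions used it exists and is unique, and is denoted $x(t)$. Firm $i$ owns link $i$ and has profit $\Pi_i(t_i,t_{-i})=t_i\cdot x_i(t)$. For $c\in\mathbb{R}_+$, a toll vector $t$ is a $c$-capped subgame perfect Nash equilibrium if $0\le t_i\le c$ for all $i$ and, for every $i\in N$ and every $t_i'\in[0,c]$, $\Pi_i(t_i,t_{-i})\ge \Pi_i(t_i',t_{-i})$ (where the flow is recomputed as the Wardrop equilibrium for $(t'_i,t_{-i})$). $\mathcal{T}(c)$ denotes the set of such equilibria. *)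

theory Defs
  imports Complex_Main
begin

definition is_flow :: "nat \<Rightarrow> (nat \<Rightarrow> real) \<Rightarrow> bool" where
  "is_flow n x \<longleftrightarrow> (\<forall>i\<in>{1..n}. 0 \<le> x i) \<and> (\<forall>i. i \<notin> {1..n} \<longrightarrow> x i = 0)
      \<and> (\<Sum>i\<in>{1..n}. x i) = 1"

definition wardrop :: "nat \<Rightarrow> (nat \<Rightarrow> real \<Rightarrow> real) \<Rightarrow> (nat \<Rightarrow> real) \<Rightarrow> (nat \<Rightarrow> real) \<Rightarrow> bool" where
  "wardrop n l t x \<longleftrightarrow> is_flow n x \<and>
     (\<forall>i\<in>{1..n}. \<forall>j\<in>{1..n}. 0 < x i \<longrightarrow> l i (x i) + t i \<le> l j (x j) + t j)"

definition eq_flow :: "nat \<Rightarrow> (nat \<Rightarrow> real \<Rightarrow> real) \<Rightarrow> (nat \<Rightarrow> real) \<Rightarrow> (nat \<Rightarrow> real)" where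
  "eq_flow n l t = (THE x. wardrop n l t x)"

definition profit :: "nat \<Rightarrow> (nat \<Rightarrow> real \<Rightarrow> real) \<Rightarrow> (nat \<Rightarrow> real) \<Rightarrow> nat \<Rightarrow> real" where
  "profit n l t i = t i * eq_flow n l t i"

definition capped_spne :: "nat \<Rightarrow> (nat \<Rightarrow> real \<Rightarrow> real) \<Rightarrow> real \<Rightarrow> (nat \<Rightarrow> real) \<Rightarrow> bool" where
  "capped_spne n l c t \<longleftrightarrow> (\<forall>i\<in>{1..n}. 0 \<le> t i \<and> t i \<le> c) \<and>
     (\<forall>i\<in>{1..n}. \<forall>t'\<in>{0..c}. profit n l t i \<ge> profit n l (t(i := t')) i)"

definition capped_spne_set :: "nat \<Rightarrow> (nat \<Rightarrow> real \<Rightarrow> real) \<Rightarrow> real \<Rightarrow> (nat \<Rightarrow> real) set" where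
  "capped_spne_set n l c = {t. capped_spne n l c t}"

end

theory Submission
  imports Defs
begin

text \<open>
  With affine latencies the Wardrop flow for tolls t fills links up to a common level L,
  x_i = max 0 ((L - b_i - t_i) / a_i). Choose weights w_j \<in> [0, 1], equal to 1 on links
  strictly below the level and 0 on links strictly above it, so that w_j / a_j is a
  subgradient of link j's flow as a function of the level. If firm i deviates and the level
  moves by \<Delta>L, the other links absorb at least \<sigma>_i \<Delta>L with \<sigma>_i = \<Sum>_{j \<noteq> i} w_j / a_j; this bounds
  firm i's new profit by a concave quadratic in its toll, maximised at the capped toll
  (L - b_i)(1 + a_i \<sigma>_i) / (1 + 2 a_i \<sigma>_i). An equilibrium is thus a level, weights and tolls
  that are consistent with one another and carry total flow 1. They are found on a
  one-parameter path along which the level increases and each weight rises from 0 to 1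
  while the level rests at b_j, by the intermediate value theorem.
\<close>

section \<open>Wardrop equilibria for affine latencies\<close>

lemma affine_cost_at_level:
  fixes a C L :: real
  assumes "a > 0"
  shows "a * max 0 ((L - C) / a) + C = max L C"
  using assms by (auto simp: max_def field_simps)

lemma wardrop_affine_of_level:
  assumes apos: "\<forall>i\<in>{1..n}. a i > 0"
    and total: "(\<Sum>i\<in>{1..n}. max 0 ((L - b i - t i) / a i)) = 1"
  shows "wardrop n (\<lambda>i y. a i * y + b i) t
           (\<lambda>i. if i \<in> {1..n} then max 0 ((L - b i - t i) / a i) else 0)"
    (is "wardrop n ?l t ?x")
proof -
  have cost: "?l j (?x j) + t j = max L (b j + t j)" if "j \<in> {1..n}" for j
    using affine_cost_at_level[of "a j" L "b j + t j"] apos that by (simp add: diff_diff_eq)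
  have "is_flow n ?x"
    using total unfolding is_flow_def by (auto intro: sum.cong)
  moreover have "?l i (?x i) + t i \<le> ?l j (?x j) + t j"
    if "i \<in> {1..n}" "j \<in> {1..n}" "0 < ?x i" for i j
  proof -
    have "0 < a i" using apos that(1) by simp
    with that(3) have "b i + t i < L"
      by (auto simp: max_def zero_less_divide_iff split: if_splits)
    then show ?thesis using cost[OF that(1)] cost[OF that(2)] by simp
  qed
  ultimately show ?thesis unfolding wardrop_def by blast
qed

lemma wardrop_affine_level:
  assumes apos: "\<forall>i\<in>{1..n}. a i > 0"
    and w: "wardrop n (\<lambda>i y. a i * y + b i) t x"
  obtains L where "\<forall>j\<in>{1..n}. x j = max 0 ((L - b j - t j) / a j)"
proof -
  define C where "C j = a j * x j + b j + t j" for j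
  define L where "L = Min (C ` {1..n})"
  have "sum x {1..n} = 1"
    using w by (simp add: wardrop_def is_flow_def)
  then have "{1..n} \<noteq> {}" by (metis sum.empty zero_neq_one)
  then have L_le: "L \<le> C j" if "j \<in> {1..n}" for j
    using that unfolding L_def by simp
  have x_nonneg: "0 \<le> x j" if "j \<in> {1..n}" for j
    using w that unfolding wardrop_def is_flow_def by auto
  have "x j = max 0 ((L - b j - t j) / a j)" if j: "j \<in> {1..n}" for j
  proof (cases "x j > 0")
    case True
    then have "C j \<le> C k" if "k \<in> {1..n}" for k
      using w j that unfolding wardrop_def C_def by auto
    then have "L = C j"
      using L_le[OF j] \<open>{1..n} \<noteq> {}\<close> j unfolding L_def by (simp add: antisym)
    moreover have "0 < a j" using apos j by simp
    ultimately show ?thesis using True by (simp add: C_def)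
  next
    case False
    then have "x j = 0" "L - b j - t j \<le> 0"
      using x_nonneg[OF j] L_le[OF j] by (auto simp: C_def)
    moreover have "0 < a j" using apos j by simp
    ultimately show ?thesis by (simp add: divide_nonpos_pos)
  qed
  then show thesis by (rule that[rule_format])
qed

lemma wardrop_affine_unique:
  assumes apos: "\<forall>i\<in>{1..n}. a i > 0"
    and w: "wardrop n (\<lambda>i y. a i * y + b i) t x"
    and w': "wardrop n (\<lambda>i y. a i * y + b i) t x'"
  shows "x = x'"
proof -
  obtain L where L: "\<forall>j\<in>{1..n}. x j = max 0 ((L - b j - t j) / a j)"
    using wardrop_affine_level[OF apos w] .
  obtain L' where L': "\<forall>j\<in>{1..n}. x' j = max 0 ((L' - b j - t j) / a j)"
    using wardrop_affine_level[OF apos w'] .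
  have sums: "sum x {1..n} = sum x' {1..n}" and outside: "\<forall>j. j \<notin> {1..n} \<longrightarrow> x j = x' j"
    using w w' unfolding wardrop_def is_flow_def by auto
  have mono: "max 0 ((M - b j - t j) / a j) \<le> max 0 ((M' - b j - t j) / a j)"
    if "M \<le> M'" "j \<in> {1..n}" for M M' j
  proof -
    have "0 < a j" using apos that(2) by simp
    with that(1) have "(M - b j - t j) / a j \<le> (M' - b j - t j) / a j"
      by (simp add: divide_right_mono)
    then show ?thesis by simp
  qed
  \<comment> \<open>both flows are pointwise ordered like their levels and have the same total\<close>
  have "\<forall>j\<in>{1..n}. x j = x' j"
  proof (cases "L \<le> L'")
    case True
    then show ?thesis using sum_mono_inv[OF sums] L L' mono by (metis finite_atLeastAtMost)
  next
    case False
    then show ?thesis using sum_mono_inv[OF sums[symmetric]] L L' mono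
      by (metis finite_atLeastAtMost nle_le)
  qed
  then show ?thesis using outside by blast
qed

lemma wardrop_affine_exists:
  assumes apos: "\<forall>i\<in>{1..n}. a i > 0" and "n \<ge> 1"
  shows "\<exists>x. wardrop n (\<lambda>i y. a i * y + b i) t x"
proof -
  define F where "F L = (\<Sum>i\<in>{1..n}. max 0 ((L - b i - t i) / a i))" for L
  define S where "S = (\<Sum>i\<in>{1..n}. \<bar>b i + t i\<bar>)"
  have S_ge: "\<bar>b i + t i\<bar> \<le> S" if "i \<in> {1..n}" for i
    unfolding S_def using that by (intro member_le_sum) auto
  have one: "1 \<in> {1..n}" using \<open>n \<ge> 1\<close> by simp
  have "F (- S - 1) = 0"
    unfolding F_def using S_ge apos by (intro sum.neutral) (force simp: divide_nonpos_pos)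
  moreover have "1 \<le> F (S + a 1)"
  proof -
    have "1 \<le> (S + a 1 - b 1 - t 1) / a 1"
      using S_ge[OF one] apos one by (simp add: le_divide_eq)
    also have "\<dots> \<le> F (S + a 1)"
      unfolding F_def by (rule order_trans[OF _ member_le_sum[OF one]]) auto
    finally show ?thesis .
  qed
  moreover have "- S - 1 \<le> S + a 1"
    using S_ge[OF one] abs_ge_zero[of "b 1 + t 1"] apos one by fastforce
  moreover have "continuous_on {- S - 1..S + a 1} F"
    unfolding F_def using apos by (intro continuous_intros) force+
  ultimately obtain L where "F L = 1"
    using IVT'[of F "- S - 1" 1 "S + a 1"] by auto
  then show ?thesis unfolding F_def using wardrop_affine_of_level[OF apos] by blast
qed

lemma eq_flow_affine:
  assumes "\<forall>i\<in>{1..n}. a i > 0" and "wardrop n (\<lambda>i y. a i * y + b i) t x"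
  shows "eq_flow n (\<lambda>i y. a i * y + b i) t = x"
  unfolding eq_flow_def using assms wardrop_affine_unique by (intro the_equality) blast+

section \<open>Best responses and an equilibrium criterion\<close>

text \<open>
  If the other links absorb exactly \<sigma> \<Delta>L, a deviation from t to \<tau> moves the level by
  \<Delta>L = (\<tau> - t) / (1 + a \<sigma>), and the profit \<tau> (x - \<sigma> \<Delta>L) is maximal at \<tau> = t exactly when t
  is given by the formula below; the result is clipped to [0, c].
\<close>

definition best_toll :: "real \<Rightarrow> real \<Rightarrow> real \<Rightarrow> real \<Rightarrow> real \<Rightarrow> real" where
  "best_toll a \<sigma> c L b = max 0 (min c ((L - b) * (a * \<sigma> + 1) / (2 * a * \<sigma> + 1)))"

lemma best_toll_bounds:
  assumes "0 \<le> c"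
  shows "0 \<le> best_toll a \<sigma> c L b" and "best_toll a \<sigma> c L b \<le> c"
  using assms unfolding best_toll_def by auto

lemma best_toll_below_level:
  assumes "0 < a" "0 \<le> \<sigma>" "L < b"
  shows "best_toll a \<sigma> c L b = 0"
proof -
  have "0 < 2 * a * \<sigma> + 1" "0 < a * \<sigma> + 1"
    using assms by (simp_all add: add_nonneg_pos)
  then have "(L - b) * (a * \<sigma> + 1) / (2 * a * \<sigma> + 1) < 0"
    using assms(3) by (simp add: divide_neg_pos mult_neg_pos)
  then show ?thesis unfolding best_toll_def by simp
qed

lemma best_toll_above_level:
  fixes a \<sigma> c L b :: real
  defines "t \<equiv> best_toll a \<sigma> c L b"
  assumes a: "0 < a" and \<sigma>: "0 \<le> \<sigma>" and c: "0 \<le> c" and "b \<le> L"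
  shows "t \<le> L - b"
    and "a * \<sigma> * t = (L - b - t) * (1 + a * \<sigma>)
         \<or> t = c \<and> a * \<sigma> * c \<le> (L - b - c) * (1 + a * \<sigma>)"
proof -
  define T where "T = (L - b) * (a * \<sigma> + 1) / (2 * a * \<sigma> + 1)"
  have D: "0 < 2 * a * \<sigma> + 1" using a \<sigma> by (simp add: add_nonneg_pos)
  then have TD: "T * (2 * a * \<sigma> + 1) = (L - b) * (a * \<sigma> + 1)"
    unfolding T_def by simp
  have "0 \<le> T" unfolding T_def using \<open>b \<le> L\<close> a \<sigma> D by simp
  moreover have "T \<le> L - b"
  proof -
    have "T * (2 * a * \<sigma> + 1) \<le> (L - b) * (2 * a * \<sigma> + 1)"
      unfolding TD using \<open>b \<le> L\<close> a \<sigma> by (intro mult_left_mono) auto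
    then show ?thesis using D by simp
  qed
  ultimately have t_cases: "t = T \<and> T \<le> c \<or> t = c \<and> c < T"
    using c unfolding t_def best_toll_def T_def[symmetric] by auto
  then show "t \<le> L - b" using \<open>T \<le> L - b\<close> by auto
  show "a * \<sigma> * t = (L - b - t) * (1 + a * \<sigma>)
        \<or> t = c \<and> a * \<sigma> * c \<le> (L - b - c) * (1 + a * \<sigma>)"
  proof (cases "t = T")
    case True
    then show ?thesis using TD by (simp add: algebra_simps)
  next
    case False
    then have "t = c" "c * (2 * a * \<sigma> + 1) \<le> T * (2 * a * \<sigma> + 1)"
      using t_cases D by auto
    then show ?thesis using TD by (simp add: algebra_simps)
  qed
qed

lemma max0_subgradient:
  fixes a w C L L' :: real
  assumes a: "0 < a" and w: "0 \<le> w" "w \<le> 1"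
    and below: "C < L \<Longrightarrow> w = 1" and above: "L < C \<Longrightarrow> w = 0"
  shows "max 0 ((L - C) / a) + w / a * (L' - L) \<le> max 0 ((L' - C) / a)"
proof (cases C L rule: linorder_cases)
  case less
  then have "0 < (L - C) / a" using a by simp
  then have "max 0 ((L - C) / a) + w / a * (L' - L) = (L' - C) / a"
    using below[OF less] a by (simp add: field_simps)
  then show ?thesis by simp
next
  case greater
  then show ?thesis using above a by (simp add: divide_nonpos_pos)
next
  case equal
  have "w * z \<le> max 0 z" for z
    using w mult_left_le_one_le[of z w] by (cases "0 \<le> z") (auto simp: mult_nonneg_nonpos)
  from this[of "(L' - L) / a"] show ?thesis using equal by simp
qed

lemma water_fill_deviation_bound:
  fixes N :: "'k set" and a b t t' w :: "'k \<Rightarrow> real"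
  assumes fin: "finite N" and i: "i \<in> N" and a: "\<forall>j\<in>N. 0 < a j"
    and total: "(\<Sum>j\<in>N. max 0 ((L - b j - t j) / a j)) = 1"
    and total': "(\<Sum>j\<in>N. max 0 ((L' - b j - t' j) / a j)) = 1"
    and others: "\<forall>j\<in>N - {i}. t' j = t j"
    and w: "\<forall>j\<in>N - {i}. 0 \<le> w j \<and> w j \<le> 1 \<and>
             (b j + t j < L \<longrightarrow> w j = 1) \<and> (L < b j + t j \<longrightarrow> w j = 0)"
  shows "max 0 ((L' - b i - t' i) / a i)
         \<le> max 0 ((L - b i - t i) / a i) - (\<Sum>j\<in>N - {i}. w j / a j) * (L' - L)"
proof -
  have "(\<Sum>j\<in>N - {i}. max 0 ((L - b j - t j) / a j)) + (\<Sum>j\<in>N - {i}. w j / a j) * (L' - L)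
        = (\<Sum>j\<in>N - {i}. max 0 ((L - (b j + t j)) / a j) + w j / a j * (L' - L))"
    by (simp add: sum.distrib sum_distrib_right diff_diff_eq)
  also have "\<dots> \<le> (\<Sum>j\<in>N - {i}. max 0 ((L' - (b j + t' j)) / a j))"
  proof (rule sum_mono)
    fix j assume "j \<in> N - {i}"
    then show "max 0 ((L - (b j + t j)) / a j) + w j / a j * (L' - L)
               \<le> max 0 ((L' - (b j + t' j)) / a j)"
      using max0_subgradient[of "a j" "w j" "b j + t j" L L'] a w others by auto
  qed
  finally show ?thesis
    using sum.remove[OF fin i, of "\<lambda>j. max 0 ((L - b j - t j) / a j)"]
      sum.remove[OF fin i, of "\<lambda>j. max 0 ((L' - b j - t' j) / a j)"] total total'
    by (simp add: algebra_simps)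
qed

lemma deviation_not_profitable:
  fixes a \<sigma> c L L' b \<tau> :: real
  defines "t \<equiv> best_toll a \<sigma> c L b"
  assumes a: "0 < a" and \<sigma>: "0 \<le> \<sigma>" and c: "0 \<le> c" and \<tau>: "0 \<le> \<tau>" "\<tau> \<le> c"
    and response: "max 0 ((L' - b - \<tau>) / a) \<le> max 0 ((L - b - t) / a) - \<sigma> * (L' - L)"
  shows "\<tau> * max 0 ((L' - b - \<tau>) / a) \<le> t * max 0 ((L - b - t) / a)"
proof -
  define x where "x = max 0 ((L - b - t) / a)"
  define x' where "x' = max 0 ((L' - b - \<tau>) / a)"
  have "0 \<le> t" using best_toll_bounds c unfolding t_def by blast
  show ?thesis
  proof (cases "x' = 0")
    case True
    then show ?thesis using \<open>0 \<le> t\<close> unfolding x_def x'_def by simp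
  next
    case False
    then have "0 < x'" unfolding x'_def by simp
    then have L': "L' = a * x' + b + \<tau>"
      using a unfolding x'_def by (auto simp: max_def field_simps split: if_splits)
    have x'_le: "x' \<le> x - \<sigma> * (L' - L)"
      using response unfolding x_def x'_def .
    show ?thesis
    proof (cases "L < b")
      case True
      have "0 \<le> a * x'" using a \<open>0 < x'\<close> by simp
      then have "0 \<le> \<sigma> * (L' - L)"
        using True \<sigma> \<tau> L' by (intro mult_nonneg_nonneg) simp_all
      moreover have "x = 0" using a True best_toll_below_level[OF a \<sigma> True]
        unfolding x_def t_def by (simp add: divide_neg_pos)
      ultimately show ?thesis using x'_le \<open>0 < x'\<close> by linarith
    next
      case False
      then have "b \<le> L" by simp
      note toll = best_toll_above_level[OF a \<sigma> c this, folded t_def]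
      then have L: "L = a * x + b + t"
        using a unfolding x_def by simp
      define A where "A = 1 + a * \<sigma>"
      have "0 < A" unfolding A_def using a \<sigma> by (simp add: add_pos_nonneg)
      have "A * x' \<le> A * x - \<sigma> * (\<tau> - t)"
        using x'_le unfolding A_def L L' by (simp add: algebra_simps)
      from mult_left_mono[OF this \<tau>(1)]
      have "A * (\<tau> * x') \<le> \<tau> * (A * x - \<sigma> * (\<tau> - t))"
        by (simp add: algebra_simps)
      also have "\<dots> \<le> A * (t * x)"
        using toll(2)
      proof
        assume "a * \<sigma> * t = (L - b - t) * (1 + a * \<sigma>)"
        then have "a * (A * x) = a * (\<sigma> * t)"
          unfolding A_def L by (simp add: algebra_simps)
        then have "A * x = \<sigma> * t" using a by simp
        \<comment> \<open>the profit loss is then a perfect square\<close>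
        then have "A * (t * x) - \<tau> * (A * x - \<sigma> * (\<tau> - t)) = \<sigma> * (t - \<tau>)\<^sup>2"
          by (simp add: algebra_simps power2_eq_square)
        moreover have "0 \<le> \<sigma> * (t - \<tau>)\<^sup>2" using \<sigma> by simp
        ultimately show ?thesis by linarith
      next
        assume "t = c \<and> a * \<sigma> * c \<le> (L - b - c) * (1 + a * \<sigma>)"
        then have cap: "t = c" and "a * \<sigma> * c \<le> (L - b - t) * (1 + a * \<sigma>)" by simp_all
        from this(2) have "a * (\<sigma> * c) \<le> a * (A * x)"
          unfolding A_def L by (simp add: algebra_simps)
        then have "\<sigma> * \<tau> \<le> A * x"
          using a mult_left_mono[OF \<tau>(2) \<sigma>] by simp
        then have "0 \<le> (c - \<tau>) * (A * x - \<sigma> * \<tau>)"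
          using \<tau> by simp
        then show ?thesis using cap by (simp add: algebra_simps)
      qed
      finally show ?thesis using \<open>0 < A\<close> unfolding x_def x'_def by simp
    qed
  qed
qed

lemma capped_spne_of_level:
  fixes L :: real and w :: "nat \<Rightarrow> real"
  assumes apos: "\<forall>i\<in>{1..n}. 0 < a i" and c: "0 \<le> c"
    and total: "(\<Sum>i\<in>{1..n}. max 0 ((L - b i - t i) / a i)) = 1"
    and w: "\<forall>j\<in>{1..n}. 0 \<le> w j \<and> w j \<le> 1 \<and> (b j < L \<longrightarrow> w j = 1) \<and> (L < b j \<longrightarrow> w j = 0)"
    and t: "\<forall>i\<in>{1..n}. t i = best_toll (a i) (\<Sum>j\<in>{1..n} - {i}. w j / a j) c L (b i)"
  shows "capped_spne n (\<lambda>i y. a i * y + b i) c t"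
proof -
  let ?l = "\<lambda>i y. a i * y + b i"
  define \<sigma> where "\<sigma> i = (\<Sum>j\<in>{1..n} - {i}. w j / a j)" for i
  have \<sigma>: "0 \<le> \<sigma> i" for i
    unfolding \<sigma>_def
  proof (intro sum_nonneg)
    fix j assume "j \<in> {1..n} - {i}"
    then have "0 < a j" "0 \<le> w j" using apos w by auto
    then show "0 \<le> w j / a j" by simp
  qed
  have t_bounds: "0 \<le> t i \<and> t i \<le> c" if "i \<in> {1..n}" for i
    using t best_toll_bounds[OF c] that by simp
  have "1 \<le> n" using total by (cases n) auto
  have flow: "eq_flow n ?l t i = max 0 ((L - b i - t i) / a i)" if "i \<in> {1..n}" for i
    using eq_flow_affine[OF apos wardrop_affine_of_level[OF apos total]] that by simp
  \<comment> \<open>the weight conditions transfer from b j to b j + t j, as b j \<le> L implies b j + t j \<le> L\<close>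
  have weights: "\<forall>j\<in>{1..n} - {i}. 0 \<le> w j \<and> w j \<le> 1 \<and>
      (b j + t j < L \<longrightarrow> w j = 1) \<and> (L < b j + t j \<longrightarrow> w j = 0)" for i
  proof
    fix j assume j: "j \<in> {1..n} - {i}"
    have "0 < a j" "t j = best_toll (a j) (\<sigma> j) c L (b j)"
      using apos t j unfolding \<sigma>_def by auto
    then have "L < b j" if "L < b j + t j"
      using that best_toll_above_level(1)[of "a j" "\<sigma> j" c "b j" L] \<sigma> c by force
    then show "0 \<le> w j \<and> w j \<le> 1 \<and> (b j + t j < L \<longrightarrow> w j = 1) \<and> (L < b j + t j \<longrightarrow> w j = 0)"
      using w t_bounds j by force
  qed
  have "profit n ?l (t(i := \<tau>)) i \<le> profit n ?l t i" if i: "i \<in> {1..n}" and \<tau>: "\<tau> \<in> {0..c}" for i \<tau>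
  proof -
    define t' where "t' = t(i := \<tau>)"
    obtain x' where x': "wardrop n ?l t' x'"
      using wardrop_affine_exists[OF apos \<open>1 \<le> n\<close>] by blast
    obtain L' where L': "\<forall>j\<in>{1..n}. x' j = max 0 ((L' - b j - t' j) / a j)"
      using wardrop_affine_level[OF apos x'] .
    have "(\<Sum>j\<in>{1..n}. max 0 ((L' - b j - t' j) / a j)) = 1"
      using x' L' unfolding wardrop_def is_flow_def by simp
    then have "max 0 ((L' - b i - \<tau>) / a i) \<le> max 0 ((L - b i - t i) / a i) - \<sigma> i * (L' - L)"
      using water_fill_deviation_bound[OF _ i apos total _ _ weights, of L' t'] i
      unfolding t'_def \<sigma>_def by simp
    then have "\<tau> * max 0 ((L' - b i - \<tau>) / a i) \<le> t i * max 0 ((L - b i - t i) / a i)"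
      using deviation_not_profitable[of "a i" "\<sigma> i" c \<tau> L' "b i" L] apos \<sigma> c \<tau> t i
      unfolding \<sigma>_def by simp
    moreover have "eq_flow n ?l t' i = max 0 ((L' - b i - \<tau>) / a i)"
      using eq_flow_affine[OF apos x'] L' i unfolding t'_def by simp
    ultimately show ?thesis unfolding profit_def t'_def[symmetric] flow[OF i]
      by (simp add: t'_def)
  qed
  then show ?thesis unfolding capped_spne_def using t_bounds by auto
qed

section \<open>A path of levels and weights\<close>

definition clamp01 :: "real \<Rightarrow> real" where
  "clamp01 z = max 0 (min 1 z)"

lemma clamp01_bounds: "0 \<le> clamp01 z" "clamp01 z \<le> 1"
  unfolding clamp01_def by auto

lemma mono_minus_clamp01_sum:
  fixes K :: "real set"
  assumes "finite K" and "\<forall>x\<in>K. \<forall>y\<in>K. x \<noteq> y \<longrightarrow> 1 \<le> \<bar>x - y\<bar>"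
  shows "mono (\<lambda>p. p - (\<Sum>x\<in>K. clamp01 (p - x)))"
  using assms
proof (induction K rule: finite_linorder_max_induct)
  case empty
  then show ?case by (simp add: mono_def)
next
  case (insert M K)
  define f where "f p = p - (\<Sum>x\<in>K. clamp01 (p - x))" for p
  have "mono f"
    using insert unfolding f_def by blast
  have below: "x \<le> M - 1" if "x \<in> K" for x
    using insert.prems insert.hyps(2) that by fastforce
  \<comment> \<open>right of M every other term is saturated, so f has slope 1 there\<close>
  have f_right: "f p = p - card K" if "M \<le> p" for p
  proof -
    have "clamp01 (p - x) = 1" if "x \<in> K" for x
      using below[OF that] \<open>M \<le> p\<close> by (simp add: clamp01_def)
    then show ?thesis unfolding f_def by simp
  qed
  have "f p - clamp01 (p - M) \<le> f q - clamp01 (q - M)" if "p \<le> q" for p q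
  proof (cases "M \<le> p")
    case True
    then show ?thesis using f_right[of p] f_right[of q] that by (simp add: clamp01_def)
  next
    case False
    have "f p \<le> f (min M q)" using \<open>mono f\<close> that False by (simp add: monoD)
    moreover have "f (min M q) \<le> f q - clamp01 (q - M)"
      using f_right[of q] f_right[of M] by (auto simp: min_def clamp01_def)
    ultimately show ?thesis using False by (simp add: clamp01_def)
  qed
  moreover have "M \<notin> K" using insert.hyps(2) by auto
  ultimately show ?case
    using insert.hyps(1) unfolding f_def by (auto simp: mono_def algebra_simps)
qed

text \<open>
  Link j's weight clamp01 (p - window_start n b j) rises from 0 to 1 on the window
  [window_start n b j, window_start n b j + 1]. Windows are ordered by b, ties broken by
  index, and are 1-separated, so path_level stays at b j on link j's window and increases
  with slope 1 between windows.
\<close>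

definition preceding :: "nat \<Rightarrow> (nat \<Rightarrow> real) \<Rightarrow> nat \<Rightarrow> nat set" where
  "preceding n b j = {k \<in> {1..n}. b k < b j \<or> b k = b j \<and> k < j}"

definition window_start :: "nat \<Rightarrow> (nat \<Rightarrow> real) \<Rightarrow> nat \<Rightarrow> real" where
  "window_start n b j = b j + real (card (preceding n b j))"

definition path_level :: "nat \<Rightarrow> (nat \<Rightarrow> real) \<Rightarrow> real \<Rightarrow> real" where
  "path_level n b p = p - (\<Sum>k\<in>{1..n}. clamp01 (p - window_start n b k))"

lemma window_start_preceding:
  assumes "k \<in> preceding n b j"
  shows "window_start n b k \<le> window_start n b j - 1"
proof -
  have "preceding n b k \<subset> preceding n b j"
    using assms unfolding preceding_def by auto
  then have "card (preceding n b k) < card (preceding n b j)"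
    by (rule psubset_card_mono[rotated]) (simp add: preceding_def)
  moreover have "b k \<le> b j" using assms unfolding preceding_def by auto
  ultimately show ?thesis unfolding window_start_def by simp
qed

lemma preceding_total:
  assumes "j \<in> {1..n}" "k \<in> {1..n}" "j \<noteq> k"
  shows "k \<in> preceding n b j \<or> j \<in> preceding n b k"
  using assms unfolding preceding_def by (auto simp: not_less_iff_gr_or_eq)

lemma window_start_separated:
  assumes "j \<in> {1..n}" "k \<in> {1..n}" "j \<noteq> k"
  shows "1 \<le> \<bar>window_start n b j - window_start n b k\<bar>"
  using preceding_total[OF assms, of b] window_start_preceding[of _ n b] by force

lemma mono_path_level: "mono (path_level n b)"
proof -
  let ?K = "window_start n b ` {1..n}"
  have "inj_on (window_start n b) {1..n}"
    by (rule inj_onI) (metis window_start_separated abs_zero diff_self not_one_le_zero)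
  then have "path_level n b = (\<lambda>p. p - (\<Sum>x\<in>?K. clamp01 (p - x)))"
    unfolding path_level_def by (simp add: sum.reindex)
  moreover have "\<forall>x\<in>?K. \<forall>y\<in>?K. x \<noteq> y \<longrightarrow> 1 \<le> \<bar>x - y\<bar>"
    using window_start_separated by blast
  ultimately show ?thesis using mono_minus_clamp01_sum[of ?K] by simp
qed

lemma path_level_window:
  assumes j: "j \<in> {1..n}" and "0 \<le> s" "s \<le> 1"
  shows "path_level n b (window_start n b j + s) = b j"
proof -
  have "clamp01 (window_start n b j + s - window_start n b k)
        = (if k \<in> preceding n b j then 1 else if k = j then s else 0)" if k: "k \<in> {1..n}" for k
  proof -
    consider "k \<in> preceding n b j" | "k = j" | "j \<in> preceding n b k" "k \<notin> preceding n b j"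
      using preceding_total[OF j k] by blast
    then show ?thesis
    proof cases
      case 1
      then show ?thesis using window_start_preceding[OF 1] assms by (simp add: clamp01_def)
    next
      case 2
      then show ?thesis using assms by (simp add: clamp01_def preceding_def)
    next
      case 3
      then show ?thesis using window_start_preceding[OF 3(1)] assms
        by (auto simp: clamp01_def preceding_def)
    qed
  qed
  then have "(\<Sum>k\<in>{1..n}. clamp01 (window_start n b j + s - window_start n b k))
        = (\<Sum>k\<in>{1..n}. if k \<in> preceding n b j then 1 else if k = j then s else 0)"
    by (intro sum.cong) auto
  also have "\<dots> = real (card (preceding n b j)) + s"
    using j by (simp add: sum.If_cases preceding_def Int_absorb1 Int_absorb2 Diff_eq[symmetric]
        flip: Collect_conj_eq) (simp add: Int_def)
  finally show ?thesis unfolding path_level_def window_start_def by simp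
qed

lemma clamp01_window_eq_1:
  assumes "j \<in> {1..n}" and "b j < path_level n b p"
  shows "clamp01 (p - window_start n b j) = 1"
proof -
  have "\<not> p \<le> window_start n b j + 1"
    using monoD[OF mono_path_level, of p "window_start n b j + 1" n b]
      path_level_window[OF assms(1), of 1 b] assms(2) by auto
  then show ?thesis by (simp add: clamp01_def)
qed

lemma clamp01_window_eq_0:
  assumes "j \<in> {1..n}" and "path_level n b p < b j"
  shows "clamp01 (p - window_start n b j) = 0"
proof -
  have "\<not> window_start n b j \<le> p"
    using monoD[OF mono_path_level, of "window_start n b j" p n b]
      path_level_window[OF assms(1), of 0 b] assms(2) by auto
  then show ?thesis by (simp add: clamp01_def)
qed

lemma path_level_0:
  assumes "\<forall>j\<in>{1..n}. 0 \<le> b j"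
  shows "path_level n b 0 = 0"
proof -
  have "clamp01 (0 - window_start n b k) = 0" if "k \<in> {1..n}" for k
  proof -
    have "0 \<le> b k" using assms that by blast
    then show ?thesis by (simp add: clamp01_def window_start_def)
  qed
  then show ?thesis unfolding path_level_def by simp
qed

lemma path_level_beyond_windows:
  assumes "\<forall>k\<in>{1..n}. window_start n b k + 1 \<le> p"
  shows "path_level n b p = p - n"
proof -
  have "clamp01 (p - window_start n b k) = 1" if "k \<in> {1..n}" for k
  proof -
    have "window_start n b k + 1 \<le> p" using assms that by blast
    then show ?thesis by (simp add: clamp01_def)
  qed
  then show ?thesis unfolding path_level_def by simp
qed

lemma window_start_le:
  assumes "j \<in> {1..n}"
  shows "window_start n b j \<le> b j + n"
proof -
  have "card (preceding n b j) \<le> card {1..n}"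
    by (rule card_mono) (auto simp: preceding_def)
  then show ?thesis unfolding window_start_def by simp
qed

section \<open>Existence of capped equilibria\<close>

definition rival_slope :: "nat \<Rightarrow> (nat \<Rightarrow> real) \<Rightarrow> (nat \<Rightarrow> real) \<Rightarrow> real \<Rightarrow> nat \<Rightarrow> real" where
  "rival_slope n a b p i = (\<Sum>j\<in>{1..n} - {i}. clamp01 (p - window_start n b j) / a j)"

definition path_toll ::
    "nat \<Rightarrow> (nat \<Rightarrow> real) \<Rightarrow> (nat \<Rightarrow> real) \<Rightarrow> real \<Rightarrow> real \<Rightarrow> nat \<Rightarrow> real" where
  "path_toll n a b c p i = best_toll (a i) (rival_slope n a b p i) c (path_level n b p) (b i)"

definition path_flow :: "nat \<Rightarrow> (nat \<Rightarrow> real) \<Rightarrow> (nat \<Rightarrow> real) \<Rightarrow> real \<Rightarrow> real \<Rightarrow> real" where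
  "path_flow n a b c p =
     (\<Sum>i\<in>{1..n}. max 0 ((path_level n b p - b i - path_toll n a b c p i) / a i))"

lemma rival_slope_nonneg:
  assumes "\<forall>j\<in>{1..n}. 0 < a j"
  shows "0 \<le> rival_slope n a b p i"
  unfolding rival_slope_def
proof (intro sum_nonneg)
  fix j assume "j \<in> {1..n} - {i}"
  then have "0 < a j" using assms by blast
  then show "0 \<le> clamp01 (p - window_start n b j) / a j" using clamp01_bounds(1) by simp
qed

lemma continuous_on_path_flow:
  assumes apos: "\<forall>j\<in>{1..n}. 0 < a j"
  shows "continuous_on S (path_flow n a b c)"
proof -
  have "2 * a i * rival_slope n a b p i + 1 \<noteq> 0" if "i \<in> {1..n}" for i p
  proof -
    have "0 < a i" using apos that by blast
    then have "0 \<le> a i * rival_slope n a b p i"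
      using rival_slope_nonneg[OF apos] by simp
    then show ?thesis by linarith
  qed
  then show ?thesis
    using apos
    unfolding path_flow_def path_toll_def best_toll_def rival_slope_def path_level_def clamp01_def
    by (intro continuous_intros) force+
qed

lemma exists_unit_path_flow:
  assumes apos: "\<forall>i\<in>{1..n}. 0 < a i" and bnn: "\<forall>i\<in>{1..n}. 0 \<le> b i"
    and "0 \<le> c" and "1 \<le> n"
  obtains p where "path_flow n a b c p = 1"
proof -
  have one: "1 \<in> {1..n}" and "0 < a 1" using \<open>1 \<le> n\<close> apos by auto
  have toll_bounds: "0 \<le> path_toll n a b c p i" "path_toll n a b c p i \<le> c" for p i
    unfolding path_toll_def using best_toll_bounds \<open>0 \<le> c\<close> by blast+
  have "path_flow n a b c 0 = 0"
    unfolding path_flow_def path_level_0[OF bnn]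
  proof (intro sum.neutral ballI)
    fix i assume i: "i \<in> {1..n}"
    then have "0 - b i - path_toll n a b c 0 i \<le> 0" and "0 < a i"
      using bnn apos toll_bounds(1)[of 0 i] by force+
    then show "max 0 ((0 - b i - path_toll n a b c 0 i) / a i) = 0"
      by (simp add: divide_nonpos_pos)
  qed
  define B where "B = (\<Sum>i\<in>{1..n}. b i)"
  define p where "p = B + n + 1 + c + a 1"
  have b_le: "b i \<le> B" if "i \<in> {1..n}" for i
    unfolding B_def using bnn that by (intro member_le_sum) auto
  have "path_level n b p = p - n"
  proof (rule path_level_beyond_windows, intro ballI)
    fix k assume "k \<in> {1..n}"
    then show "window_start n b k + 1 \<le> p"
      using window_start_le[of k n b] b_le[of k] \<open>0 < a 1\<close> \<open>0 \<le> c\<close> unfolding p_def by simp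
  qed
  then have "1 \<le> (path_level n b p - b 1 - path_toll n a b c p 1) / a 1"
    using b_le[OF one] toll_bounds(2)[of p 1] \<open>0 < a 1\<close> unfolding p_def
    by (simp add: le_divide_eq)
  also have "\<dots> \<le> path_flow n a b c p"
    unfolding path_flow_def by (rule order_trans[OF _ member_le_sum[OF one]]) auto
  finally have "1 \<le> path_flow n a b c p" .
  moreover have "0 \<le> p"
    using b_le[OF one] bnn one \<open>0 < a 1\<close> \<open>0 \<le> c\<close> unfolding p_def by force
  ultimately obtain q where "path_flow n a b c q = 1"
    using IVT'[of "path_flow n a b c" 0 1 p] \<open>path_flow n a b c 0 = 0\<close>
      continuous_on_path_flow[OF apos] by auto
  then show thesis by (rule that)
qed

lemma capped_spne_path_toll:
  assumes apos: "\<forall>i\<in>{1..n}. 0 < a i" and "0 \<le> c" and "path_flow n a b c p = 1"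
  shows "capped_spne n (\<lambda>i y. a i * y + b i) c (path_toll n a b c p)"
proof (rule capped_spne_of_level[OF apos \<open>0 \<le> c\<close>])
  show "(\<Sum>i\<in>{1..n}. max 0 ((path_level n b p - b i - path_toll n a b c p i) / a i)) = 1"
    using \<open>path_flow n a b c p = 1\<close> unfolding path_flow_def .
  show "\<forall>j\<in>{1..n}. 0 \<le> clamp01 (p - window_start n b j) \<and> clamp01 (p - window_start n b j) \<le> 1 \<and>
      (b j < path_level n b p \<longrightarrow> clamp01 (p - window_start n b j) = 1) \<and>
      (path_level n b p < b j \<longrightarrow> clamp01 (p - window_start n b j) = 0)"
    using clamp01_bounds clamp01_window_eq_1 clamp01_window_eq_0 by blast
  show "\<forall>i\<in>{1..n}. path_toll n a b c p i = best_toll (a i)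
      (\<Sum>j\<in>{1..n} - {i}. clamp01 (p - window_start n b j) / a j) c (path_level n b p) (b i)"
    unfolding path_toll_def rival_slope_def by simp
qed

theorem mainTheorem1:
  fixes n :: nat and a b :: "nat \<Rightarrow> real" and c :: real
  assumes "n \<ge> 2"
    and "\<forall>i\<in>{1..n}. a i > 0"
    and "\<forall>i\<in>{1..n}. b i \<ge> 0"
    and "c \<ge> 0"
  shows "capped_spne_set n (\<lambda>i y. a i * y + b i) c \<noteq> {}"
proof -
  obtain p where "path_flow n a b c p = 1"
    using exists_unit_path_flow[OF assms(2-4)] assms(1) by auto
  then have "capped_spne n (\<lambda>i y. a i * y + b i) c (path_toll n a b c p)"
    using capped_spne_path_toll assms(2,4) by blast
  then show ?thesis unfolding capped_spne_set_def by blast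
qed

end
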